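(* Let $P_1$ be a set of $n_1$ points and $P_2$ a set of $n_2$ points in the plane, each in general position, with $n_1,n_2$ even, and let $G_1$ and $G_2$ be their underlying graphs. Then there exist a set $P$ of $n_1+n_2$ points in the plane in general position and a partition $P=Q_1\sqcup Q_2$ such that the underlying graph of $P$ is the disjoint union of two graphs on $Q_1$ and $Q_2$, with no edges between $Q_1$ and $Q_2$, that are isomorphic to $G_1$ and $G_2$ respectively.
   Context: Points are in general position if no three are collinear. For a finite set $P$ of $n$ points in general position with $n$ even, a halving line of $P$ is a line through two points of $P$ that has exactly $(n-2)/2$ points of $P$ strictly on each side. The underlying graph of $P$ has vertex set $P$, and two points are adjacent if and only if the line through them is a halving line of $P$. *)

theory Defs
  imports "HOL-Analysis.Analysis"
begin

type_synonym point = "real \<times> real"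

text \<open>Orientation: positive iff r lies strictly to the left of the directed line p q.\<close>
definition orient :: "point \<Rightarrow> point \<Rightarrow> point \<Rightarrow> real" where
  "orient p q r = (fst q - fst p) * (snd r - snd p) - (snd q - snd p) * (fst r - fst p)"

definition general_position :: "point set \<Rightarrow> bool" where
  "general_position P \<longleftrightarrow>
     (\<forall>p\<in>P. \<forall>q\<in>P. \<forall>r\<in>P. p \<noteq> q \<and> p \<noteq> r \<and> q \<noteq> r \<longrightarrow> \<not> collinear {p, q, r})"

definition halving_line :: "point set \<Rightarrow> point \<Rightarrow> point \<Rightarrow> bool" where
  "halving_line P p q \<longleftrightarrow> p \<in> P \<and> q \<in> P \<and> p \<noteq> q \<and>
     2 * card {r \<in> P. orient p q r > 0} + 2 = card P \<and>
     2 * card {r \<in> P. orient p q r < 0} + 2 = card P"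

definition underlying_adj :: "point set \<Rightarrow> point \<Rightarrow> point \<Rightarrow> bool" where
  "underlying_adj P p q \<longleftrightarrow> halving_line P p q"

end

theory Submission
  imports Defs
begin

(*
  Shear and translate P1 so that its points have distinct x-coordinates and the y-axis is a
  halving line avoiding it, and likewise P2 with the roles of the axes exchanged; shears preserve
  orientations, hence underlying graphs. Then squash the first set towards the x-axis and the second
  towards the y-axis by a small factor e. At e = 0 the points lie on the two axes, and every
  orientation that is nonzero there keeps its sign for small e. A line through two points of the
  same set then separates the other set by the corresponding axis, i.e. exactly in half, so it halves
  the union iff it halved its own set. A line through p in the first and q in the second set has all
  points across the y-axis from p and across the x-axis from q on one side -- already half of the
  union -- so it is never a halving line.
*)

lemma orient_commute: "orient b a c = - orient a b c"
  by (simp add: orient_def algebra_simps)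

lemma parallel_iff_cross_eq_0:
  fixes u v :: "real \<times> real"
  shows "u = 0 \<or> v = 0 \<or> (\<exists>k. v = k *\<^sub>R u) \<longleftrightarrow> fst u * snd v = snd u * fst v"
proof
  assume cross: "fst u * snd v = snd u * fst v"
  then have "v = (fst v / fst u) *\<^sub>R u" if "fst u \<noteq> 0"
    using that by (simp add: prod_eq_iff field_simps)
  moreover have "v = (snd v / snd u) *\<^sub>R u" if "snd u \<noteq> 0"
    using that cross by (simp add: prod_eq_iff field_simps)
  ultimately show "u = 0 \<or> v = 0 \<or> (\<exists>k. v = k *\<^sub>R u)"
    by (metis prod_eq_iff zero_prod_def fst_conv snd_conv)
qed auto

lemma collinear_iff_orient_eq_0: "collinear {a, b, c} \<longleftrightarrow> orient a b c = 0"
proof -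
  have "collinear {a, b, c} \<longleftrightarrow> collinear {0, b - a, c - a}"
    using collinear_3[of b a c] by (simp add: insert_commute)
  also have "\<dots> \<longleftrightarrow> fst (b - a) * snd (c - a) = snd (b - a) * fst (c - a)"
    by (simp only: collinear_lemma parallel_iff_cross_eq_0)
  also have "\<dots> \<longleftrightarrow> orient a b c = 0"
    by (simp add: orient_def)
  finally show ?thesis .
qed

lemma general_position_iff_orient:
  "general_position P \<longleftrightarrow>
     (\<forall>a\<in>P. \<forall>b\<in>P. \<forall>c\<in>P. a \<noteq> b \<and> a \<noteq> c \<and> b \<noteq> c \<longrightarrow> orient a b c \<noteq> 0)"
  by (simp add: general_position_def collinear_iff_orient_eq_0)

lemma halving_line_sgn_iff:
  "halving_line P a b \<longleftrightarrow> a \<in> P \<and> b \<in> P \<and> a \<noteq> b \<and>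
     (\<forall>s\<in>{-1, 1}. 2 * card {r\<in>P. sgn (orient a b r) = s} + 2 = card P)"
  by (auto simp: halving_line_def sgn_1_pos sgn_1_neg)

lemma halving_line_commute: "halving_line P b a \<longleftrightarrow> halving_line P a b"
proof -
  have "{r\<in>P. orient b a r > 0} = {r\<in>P. orient a b r < 0}"
       "{r\<in>P. orient b a r < 0} = {r\<in>P. orient a b r > 0}"
    by (auto simp: orient_commute[of b a])
  then show ?thesis
    unfolding halving_line_def by auto
qed

lemma general_position_image:
  assumes "inj \<sigma>" "\<And>a b c. orient (\<sigma> a) (\<sigma> b) (\<sigma> c) = orient a b c"
    and "general_position P"
  shows "general_position (\<sigma> ` P)"
  using assms by (auto simp: general_position_iff_orient inj_eq)

lemma halving_line_image:
  assumes "inj \<sigma>" "\<And>a b c. orient (\<sigma> a) (\<sigma> b) (\<sigma> c) = orient a b c"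
  shows "halving_line (\<sigma> ` P) (\<sigma> a) (\<sigma> b) \<longleftrightarrow> halving_line P a b"
proof -
  have side: "card {r\<in>\<sigma> ` P. R (orient (\<sigma> a) (\<sigma> b) r)} = card {r\<in>P. R (orient a b r)}"
    for R :: "real \<Rightarrow> bool"
  proof -
    have "{r\<in>\<sigma> ` P. R (orient (\<sigma> a) (\<sigma> b) r)} = \<sigma> ` {r\<in>P. R (orient (\<sigma> a) (\<sigma> b) (\<sigma> r))}"
      by blast
    then show ?thesis
      using assms by (simp add: card_image inj_on_subset)
  qed
  show ?thesis
    using side[of "\<lambda>x. x > 0"] side[of "\<lambda>x. x < 0"] side[of "\<lambda>_. True"] assms(1)
    by (simp add: halving_line_def inj_image_mem_iff inj_eq)
qed

definition halved_by :: "('a \<Rightarrow> real) \<Rightarrow> 'a set \<Rightarrow> bool" where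
  "halved_by h S \<longleftrightarrow> inj_on h S \<and> 0 \<notin> h ` S \<and> 2 * card {p\<in>S. h p > 0} = card S"

lemma card_pos_add_card_neg:
  fixes h :: "'a \<Rightarrow> real"
  assumes "finite S" "0 \<notin> h ` S"
  shows "card {p\<in>S. h p > 0} + card {p\<in>S. h p < 0} = card S"
proof -
  have "{p\<in>S. h p > 0} \<union> {p\<in>S. h p < 0} = S"
    using assms(2) by force
  moreover have "card ({p\<in>S. h p > 0} \<union> {p\<in>S. h p < 0}) = card {p\<in>S. h p > 0} + card {p\<in>S. h p < 0}"
    using assms(1) by (intro card_Un_disjoint) auto
  ultimately show ?thesis
    by simp
qed

lemma halved_by_card_sgn:
  assumes "finite S" "halved_by h S" "s \<in> {-1, 1}"
  shows "2 * card {p\<in>S. sgn (h p) = s} = card S"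
proof -
  have pos: "2 * card {p\<in>S. h p > 0} = card S" and "0 \<notin> h ` S"
    using assms(2) by (auto simp: halved_by_def)
  then have "card {p\<in>S. h p > 0} + card {p\<in>S. h p < 0} = card S"
    using assms(1) card_pos_add_card_neg by blast
  then show ?thesis
    using assms(3) pos by (auto simp: sgn_1_pos sgn_1_neg)
qed

lemma halved_by_card_sgn_mult:
  assumes "finite S" "halved_by h S" "c \<noteq> 0" "s \<in> {-1, 1}"
  shows "2 * card {p\<in>S. sgn (c * h p) = s} = card S"
proof -
  have "sgn (c * h p) = s \<longleftrightarrow> sgn (h p) = sgn c * s" for p
    using assms(3) by (cases "c > 0") (auto simp: sgn_mult)
  moreover have "sgn c * s \<in> {-1, 1}"
    using assms(3,4) by (auto simp: sgn_real_def)
  ultimately show ?thesis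
    using halved_by_card_sgn[OF assms(1,2)] by presburger
qed

lemma halved_by_image:
  assumes "inj_on \<sigma> S"
  shows "halved_by h (\<sigma> ` S) \<longleftrightarrow> halved_by (h \<circ> \<sigma>) S"
proof -
  have "{x\<in>\<sigma> ` S. h x > 0} = \<sigma> ` {p\<in>S. h (\<sigma> p) > 0}"
    by blast
  then have "card {x\<in>\<sigma> ` S. h x > 0} = card {p\<in>S. h (\<sigma> p) > 0}"
    using assms by (simp add: card_image inj_on_subset)
  then show ?thesis
    using assms by (simp add: halved_by_def comp_inj_on_iff card_image image_comp)
qed

lemma ex_card_less_eq:
  fixes T :: "real set"
  assumes "finite T" "k \<le> card T"
  shows "\<exists>c. c \<notin> T \<and> card {x\<in>T. x < c} = k"
  using assms
proof (induction T arbitrary: k rule: finite_linorder_max_induct)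
  case empty
  then show ?case by auto
next
  case (insert b A)
  show ?case
  proof (cases "k = card (insert b A)")
    case True
    have "{x \<in> insert b A. x < b + 1} = insert b A" "b + 1 \<notin> insert b A"
      using insert by force+
    then show ?thesis using True by metis
  next
    case False
    then have "k \<le> card A" using insert by auto
    then obtain c where c: "c \<notin> A" "card {x\<in>A. x < c} = k" using insert by blast
    show ?thesis
    proof (cases "c < b")
      case True
      then have "{x \<in> insert b A. x < c} = {x\<in>A. x < c}" by auto
      then show ?thesis using c True by auto
    next
      case False
      then have "{x\<in>A. x < c} = A" using insert by force
      then have "k = card A" using c by simp
      define c' where "c' = (if A = {} then b - 1 else (Max A + b) / 2)"
      have "c' < b" "\<forall>x\<in>A. x < c'"
      proof -
        have "x \<le> Max A" "Max A < b" if "x \<in> A" for x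
        proof -
          have "Max A \<in> A"
            using insert that by (intro Max_in) auto
          then show "x \<le> Max A" "Max A < b"
            using insert that by auto
        qed
        then show "c' < b" "\<forall>x\<in>A. x < c'"
          by (fastforce simp: c'_def)+
      qed
      then have "{x \<in> insert b A. x < c'} = A" "c' \<notin> insert b A" by auto
      then show ?thesis using \<open>k = card A\<close> by metis
    qed
  qed
qed

lemma ex_halved_by_translate:
  assumes "finite S" "inj_on h S" "even (card S)"
  shows "\<exists>c. halved_by (\<lambda>p. h p - c) S"
proof -
  obtain c where c: "c \<notin> h ` S" "card {x\<in>h ` S. x < c} = card S div 2"
    using ex_card_less_eq[of "h ` S" "card S div 2"] assms by (auto simp: card_image)
  have "h ` {p\<in>S. h p < c} = {x\<in>h ` S. x < c}"
    by auto
  then have below: "card {p\<in>S. h p < c} = card S div 2"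
    using c(2) assms(2) by (metis (no_types, lifting) card_image inj_on_subset mem_Collect_eq subsetI)
  have "card {p\<in>S. h p - c > 0} + card {p\<in>S. h p - c < 0} = card S"
    using assms(1) c(1) by (intro card_pos_add_card_neg) auto
  then have "2 * card {p\<in>S. h p - c > 0} = card S"
    using below assms(3) by auto
  moreover have "inj_on (\<lambda>p. h p - c) S" "0 \<notin> (\<lambda>p. h p - c) ` S"
    using assms(2) c(1) by (auto simp: inj_on_def)
  ultimately show ?thesis
    unfolding halved_by_def by blast
qed

lemma ex_inj_on_linear_combination:
  assumes "finite S" "inj_on (\<lambda>p. (a p, b p)) S"
  shows "\<exists>t::real. inj_on (\<lambda>p. a p + t * b p) S"
proof -
  \<comment> \<open>only finitely many values of t make two points of S collide\<close>
  let ?bad = "(\<lambda>(p, q). (a q - a p) / (b p - b q)) ` (S \<times> S)"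
  obtain t where t: "t \<notin> ?bad"
    using ex_new_if_finite[OF infinite_UNIV_char_0, of ?bad] assms(1) by auto
  have "p = q" if "p \<in> S" "q \<in> S" "a p + t * b p = a q + t * b q" for p q
  proof (cases "b p = b q")
    case True
    then show ?thesis
      using that assms(2) by (auto dest: inj_onD)
  next
    case False
    then have "t = (a q - a p) / (b p - b q)"
      using that(3) by (simp add: field_simps)
    then show ?thesis
      using t that(1,2) by auto
  qed
  then show ?thesis
    by (auto intro: inj_onI)
qed

lemma ex_halved_by_shear:
  assumes "finite S" "even (card S)" "inj_on (\<lambda>p. (a p, b p)) S"
  shows "\<exists>t c. halved_by (\<lambda>p. a p + t * b p - c) S"
  using ex_inj_on_linear_combination[OF assms(1,3)] ex_halved_by_translate[OF assms(1) _ assms(2)]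
  by blast

lemma general_position_orient_ne_0:
  "general_position P \<Longrightarrow> a \<in> P \<Longrightarrow> b \<in> P \<Longrightarrow> c \<in> P \<Longrightarrow> a \<noteq> b \<Longrightarrow> a \<noteq> c \<Longrightarrow> b \<noteq> c \<Longrightarrow>
    orient a b c \<noteq> 0"
  by (simp add: general_position_iff_orient)

lemma Inl_in_Plus_iff [simp]: "Inl a \<in> A <+> B \<longleftrightarrow> a \<in> A"
  by auto

lemma Inr_in_Plus_iff [simp]: "Inr b \<in> A <+> B \<longleftrightarrow> b \<in> B"
  by auto

lemma tendsto_orient:
  assumes "(f \<longlongrightarrow> a) F" "(g \<longlongrightarrow> b) F" "(h \<longlongrightarrow> c) F"
  shows "((\<lambda>x. orient (f x) (g x) (h x)) \<longlongrightarrow> orient a b c) F"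
  unfolding orient_def by (intro tendsto_intros assms)

lemma eventually_sgn_eq_limit:
  fixes f :: "'a \<Rightarrow> real"
  assumes "(f \<longlongrightarrow> l) F" "l \<noteq> 0"
  shows "eventually (\<lambda>x. sgn (f x) = sgn l) F"
proof (cases "l > 0")
  case True
  then show ?thesis
    using order_tendstoD(1)[OF assms(1) True] by (auto elim: eventually_mono)
next
  case False
  then have "l < 0"
    using assms(2) by simp
  then show ?thesis
    using order_tendstoD(2)[OF assms(1) \<open>l < 0\<close>] by (auto elim: eventually_mono)
qed

definition cross_embed :: "real \<Rightarrow> point + point \<Rightarrow> point" where
  "cross_embed e = case_sum (\<lambda>p. (fst p, e * snd p)) (\<lambda>q. (e * fst q, snd q))"

lemma cross_embed_simps:
  "cross_embed e (Inl p) = (fst p, e * snd p)"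
  "cross_embed e (Inr q) = (e * fst q, snd q)"
  by (simp_all add: cross_embed_def)

lemma orient_cross_embed_same_side:
  "orient (cross_embed e (Inl p)) (cross_embed e (Inl q)) (cross_embed e (Inl r)) = e * orient p q r"
  "orient (cross_embed e (Inr p)) (cross_embed e (Inr q)) (cross_embed e (Inr r)) = e * orient p q r"
  by (simp_all add: cross_embed_simps orient_def algebra_simps)

lemma tendsto_cross_embed: "((\<lambda>e. cross_embed e u) \<longlongrightarrow> cross_embed 0 u) (at_right 0)"
proof -
  have "((\<lambda>e. e * c) \<longlongrightarrow> 0) (at_right 0)" for c :: real
    by (intro tendsto_mult_left_zero tendsto_ident_at)
  then show ?thesis
    by (cases u) (auto simp: cross_embed_simps intro: tendsto_Pair)
qed

locale halved_pair =
  fixes A B :: "point set"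
  assumes finite: "finite A" "finite B"
    and general_position: "general_position A" "general_position B"
    and halved: "halved_by fst A" "halved_by snd B"
begin

lemma fst_ne_0: "p \<in> A \<Longrightarrow> fst p \<noteq> 0"
  using halved(1) by (auto simp: halved_by_def)

lemma snd_ne_0: "q \<in> B \<Longrightarrow> snd q \<noteq> 0"
  using halved(2) by (auto simp: halved_by_def)

lemma fst_eq_iff: "p \<in> A \<Longrightarrow> q \<in> A \<Longrightarrow> fst p = fst q \<longleftrightarrow> p = q"
  using halved(1) by (auto simp: halved_by_def dest: inj_onD)

lemma snd_eq_iff: "p \<in> B \<Longrightarrow> q \<in> B \<Longrightarrow> snd p = snd q \<longleftrightarrow> p = q"
  using halved(2) by (auto simp: halved_by_def dest: inj_onD)

lemma inj_on_cross_embed_0: "inj_on (cross_embed 0) (A <+> B)"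
proof (rule inj_onI)
  fix u v
  assume "u \<in> A <+> B" "v \<in> A <+> B" "cross_embed 0 u = cross_embed 0 v"
  then show "u = v"
    by (elim PlusE) (auto simp: cross_embed_simps fst_eq_iff snd_eq_iff dest: fst_ne_0 snd_ne_0)
qed

lemma orient_cross_embed_0_ne_0:
  assumes "u \<in> A <+> B" "v \<in> A <+> B" "w \<in> A <+> B" "u \<noteq> v" "u \<noteq> w" "v \<noteq> w"
    and "\<not> (isl u = isl v \<and> isl v = isl w)"
  shows "orient (cross_embed 0 u) (cross_embed 0 v) (cross_embed 0 w) \<noteq> 0"
  using assms
  by (cases u; cases v; cases w) (auto simp: cross_embed_simps orient_def fst_eq_iff snd_eq_iff dest: fst_ne_0 snd_ne_0)

end

locale cross_configuration = halved_pair +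
  fixes e :: real
  assumes e_pos: "e > 0"
    and inj_on_cross_embed: "inj_on (cross_embed e) (A <+> B)"
    and sgn_orient_cross_embed:
      "\<And>u v w. u \<in> A <+> B \<Longrightarrow> v \<in> A <+> B \<Longrightarrow> w \<in> A <+> B \<Longrightarrow>
        orient (cross_embed 0 u) (cross_embed 0 v) (cross_embed 0 w) \<noteq> 0 \<Longrightarrow>
        sgn (orient (cross_embed e u) (cross_embed e v) (cross_embed e w)) =
        sgn (orient (cross_embed 0 u) (cross_embed 0 v) (cross_embed 0 w))"

lemma (in halved_pair) ex_cross_configuration: "\<exists>e. cross_configuration A B e"
proof -
  let ?D = "A <+> B"
  have "finite ?D"
    using finite by simp
  have "\<forall>\<^sub>F e in at_right 0. \<forall>u\<in>?D. \<forall>v\<in>?D. cross_embed e u = cross_embed e v \<longrightarrow> u = v"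
  proof (intro eventually_ball_finite \<open>finite ?D\<close> ballI)
    fix u v assume uv: "u \<in> ?D" "v \<in> ?D"
    have "\<forall>\<^sub>F e in at_right 0. cross_embed e u - cross_embed e v \<noteq> 0" if "u \<noteq> v"
      using that uv inj_on_cross_embed_0
      by (intro tendsto_imp_eventually_ne[OF tendsto_diff[OF tendsto_cross_embed tendsto_cross_embed]])
        (auto simp: inj_on_def)
    then show "\<forall>\<^sub>F e in at_right 0. cross_embed e u = cross_embed e v \<longrightarrow> u = v"
      by (cases "u = v") (auto elim: eventually_mono)
  qed
  moreover have "\<forall>\<^sub>F e in at_right 0. \<forall>u\<in>?D. \<forall>v\<in>?D. \<forall>w\<in>?D.
      orient (cross_embed 0 u) (cross_embed 0 v) (cross_embed 0 w) \<noteq> 0 \<longrightarrow>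
      sgn (orient (cross_embed e u) (cross_embed e v) (cross_embed e w)) =
      sgn (orient (cross_embed 0 u) (cross_embed 0 v) (cross_embed 0 w))"
  proof (intro eventually_ball_finite \<open>finite ?D\<close> ballI)
    fix u v w
    let ?lim = "orient (cross_embed 0 u) (cross_embed 0 v) (cross_embed 0 w)"
    have "\<forall>\<^sub>F e in at_right 0. sgn (orient (cross_embed e u) (cross_embed e v) (cross_embed e w)) = sgn ?lim"
      if "?lim \<noteq> 0"
      using that by (intro eventually_sgn_eq_limit tendsto_orient tendsto_cross_embed)
    then show "\<forall>\<^sub>F e in at_right 0. ?lim \<noteq> 0 \<longrightarrow>
        sgn (orient (cross_embed e u) (cross_embed e v) (cross_embed e w)) = sgn ?lim"
      by (cases "?lim = 0") (auto elim: eventually_mono)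
  qed
  moreover have "\<forall>\<^sub>F e in at_right 0. (0::real) < e"
    by (rule eventually_at_right_less)
  ultimately have "\<exists>e. (\<forall>u\<in>?D. \<forall>v\<in>?D. cross_embed e u = cross_embed e v \<longrightarrow> u = v) \<and>
      (\<forall>u\<in>?D. \<forall>v\<in>?D. \<forall>w\<in>?D. orient (cross_embed 0 u) (cross_embed 0 v) (cross_embed 0 w) \<noteq> 0 \<longrightarrow>
        sgn (orient (cross_embed e u) (cross_embed e v) (cross_embed e w)) =
        sgn (orient (cross_embed 0 u) (cross_embed 0 v) (cross_embed 0 w))) \<and> 0 < e"
    by (intro eventually_happens'[OF trivial_limit_at_right_real] eventually_conj)
  then show ?thesis
    unfolding cross_configuration_def cross_configuration_axioms_def inj_on_def
    using halved_pair_axioms by blast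
qed

lemma orient_cross_embed_0:
  "orient (cross_embed 0 (Inl p)) (cross_embed 0 (Inl q)) (cross_embed 0 (Inr r)) = (fst q - fst p) * snd r"
  "orient (cross_embed 0 (Inr p)) (cross_embed 0 (Inr q)) (cross_embed 0 (Inl r)) = (snd p - snd q) * fst r"
  "orient (cross_embed 0 (Inl p)) (cross_embed 0 (Inr q)) (cross_embed 0 (Inl r)) = - snd q * (fst r - fst p)"
  "orient (cross_embed 0 (Inl p)) (cross_embed 0 (Inr q)) (cross_embed 0 (Inr r)) = - fst p * (snd r - snd q)"
  by (simp_all add: cross_embed_simps orient_def algebra_simps)

context cross_configuration
begin

definition points :: "point set" where
  "points = cross_embed e ` (A <+> B)"

lemma card_points_filter:
  "card {x\<in>points. \<Phi> x} =
     card {p\<in>A. \<Phi> (cross_embed e (Inl p))} + card {q\<in>B. \<Phi> (cross_embed e (Inr q))}"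
proof -
  let ?S = "{p\<in>A. \<Phi> (cross_embed e (Inl p))} <+> {q\<in>B. \<Phi> (cross_embed e (Inr q))}"
  have "{x\<in>points. \<Phi> x} = cross_embed e ` ?S"
    by (auto simp: points_def Plus_def)
  moreover have "inj_on (cross_embed e) ?S"
    by (rule inj_on_subset[OF inj_on_cross_embed]) auto
  ultimately show ?thesis
    using finite by (simp add: card_image card_Plus)
qed

lemma card_points: "card points = card A + card B"
  using card_points_filter[of "\<lambda>_. True"] by simp

lemma finite_points: "finite points"
  using finite by (simp add: points_def)

lemma points_eq: "points = cross_embed e ` Inl ` A \<union> cross_embed e ` Inr ` B"
  by (auto simp: points_def Plus_def)

lemma inj_on_cross_embed_Inl: "inj_on (\<lambda>p. cross_embed e (Inl p)) A"
  by (rule inj_onI) (auto dest: inj_onD[OF inj_on_cross_embed])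

lemma inj_on_cross_embed_Inr: "inj_on (\<lambda>q. cross_embed e (Inr q)) B"
  by (rule inj_onI) (auto dest: inj_onD[OF inj_on_cross_embed])

lemma cross_embed_Inl_ne_Inr: "p \<in> A \<Longrightarrow> q \<in> B \<Longrightarrow> cross_embed e (Inl p) \<noteq> cross_embed e (Inr q)"
  using inj_on_cross_embed by (auto dest: inj_onD)

lemma sgn_orient_cross_embed_mixed:
  assumes "u \<in> A <+> B" "v \<in> A <+> B" "w \<in> A <+> B" "u \<noteq> v" "u \<noteq> w" "v \<noteq> w"
    and "\<not> (isl u = isl v \<and> isl v = isl w)"
  shows "sgn (orient (cross_embed e u) (cross_embed e v) (cross_embed e w)) =
         sgn (orient (cross_embed 0 u) (cross_embed 0 v) (cross_embed 0 w))"
  using assms orient_cross_embed_0_ne_0 sgn_orient_cross_embed by blast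

lemma orient_cross_embed_ne_0:
  assumes "u \<in> A <+> B" "v \<in> A <+> B" "w \<in> A <+> B" "u \<noteq> v" "u \<noteq> w" "v \<noteq> w"
  shows "orient (cross_embed e u) (cross_embed e v) (cross_embed e w) \<noteq> 0"
proof (cases "isl u = isl v \<and> isl v = isl w")
  case True
  then consider p q r where "u = Inl p" "v = Inl q" "w = Inl r"
    | p q r where "u = Inr p" "v = Inr q" "w = Inr r"
    by (cases u; cases v; cases w) auto
  then show ?thesis
    using assms general_position e_pos
    by cases (simp_all add: orient_cross_embed_same_side general_position_orient_ne_0)
next
  case False
  then show ?thesis
    using assms sgn_orient_cross_embed_mixed orient_cross_embed_0_ne_0 by (metis sgn_eq_0_iff)
qed

lemma general_position_points: "general_position points"
  using orient_cross_embed_ne_0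
  by (auto simp: general_position_iff_orient points_def)

lemma halving_line_points_Inl_iff:
  assumes "p \<in> A" "q \<in> A"
  shows "halving_line points (cross_embed e (Inl p)) (cross_embed e (Inl q)) \<longleftrightarrow> halving_line A p q"
proof (cases "p = q")
  case True
  then show ?thesis
    by (simp add: halving_line_def)
next
  case False
  have side: "2 * card {x\<in>points. sgn (orient (cross_embed e (Inl p)) (cross_embed e (Inl q)) x) = s}
      = 2 * card {r\<in>A. sgn (orient p q r) = s} + card B" if "s \<in> {-1, 1}" for s
  proof -
    have "sgn (orient (cross_embed e (Inl p)) (cross_embed e (Inl q)) (cross_embed e (Inr r)))
        = sgn ((fst q - fst p) * snd r)" if "r \<in> B" for r
      using sgn_orient_cross_embed_mixed[of "Inl p" "Inl q" "Inr r"] assms False that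
      by (simp add: orient_cross_embed_0)
    then have "{r\<in>B. sgn (orient (cross_embed e (Inl p)) (cross_embed e (Inl q)) (cross_embed e (Inr r))) = s}
        = {r\<in>B. sgn ((fst q - fst p) * snd r) = s}"
      by auto
    moreover have "2 * card {r\<in>B. sgn ((fst q - fst p) * snd r) = s} = card B"
      using assms False that finite halved by (intro halved_by_card_sgn_mult) (auto simp: fst_eq_iff)
    ultimately show ?thesis
      using e_pos by (simp add: card_points_filter orient_cross_embed_same_side sgn_mult)
  qed
  have "cross_embed e (Inl p) \<noteq> cross_embed e (Inl q)"
    using inj_on_cross_embed assms False by (simp add: inj_on_eq_iff)
  then show ?thesis
    using side[of 1] side[of "-1"] assms card_points
    by (auto simp: halving_line_sgn_iff points_def)
qed

lemma halving_line_points_Inr_iff: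
  assumes "p \<in> B" "q \<in> B"
  shows "halving_line points (cross_embed e (Inr p)) (cross_embed e (Inr q)) \<longleftrightarrow> halving_line B p q"
proof (cases "p = q")
  case True
  then show ?thesis
    by (simp add: halving_line_def)
next
  case False
  have side: "2 * card {x\<in>points. sgn (orient (cross_embed e (Inr p)) (cross_embed e (Inr q)) x) = s}
      = 2 * card {r\<in>B. sgn (orient p q r) = s} + card A" if "s \<in> {-1, 1}" for s
  proof -
    have "sgn (orient (cross_embed e (Inr p)) (cross_embed e (Inr q)) (cross_embed e (Inl r)))
        = sgn ((snd p - snd q) * fst r)" if "r \<in> A" for r
      using sgn_orient_cross_embed_mixed[of "Inr p" "Inr q" "Inl r"] assms False that
      by (simp add: orient_cross_embed_0)
    then have "{r\<in>A. sgn (orient (cross_embed e (Inr p)) (cross_embed e (Inr q)) (cross_embed e (Inl r))) = s}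
        = {r\<in>A. sgn ((snd p - snd q) * fst r) = s}"
      by auto
    moreover have "2 * card {r\<in>A. sgn ((snd p - snd q) * fst r) = s} = card A"
      using assms False that finite halved by (intro halved_by_card_sgn_mult) (auto simp: snd_eq_iff)
    ultimately show ?thesis
      using e_pos by (simp add: card_points_filter orient_cross_embed_same_side sgn_mult)
  qed
  have "cross_embed e (Inr p) \<noteq> cross_embed e (Inr q)"
    using inj_on_cross_embed assms False by (simp add: inj_on_eq_iff)
  then show ?thesis
    using side[of 1] side[of "-1"] assms card_points
    by (auto simp: halving_line_sgn_iff points_def)
qed

lemma not_halving_line_points_Inl_Inr:
  assumes "p \<in> A" "q \<in> B"
  shows "\<not> halving_line points (cross_embed e (Inl p)) (cross_embed e (Inr q))"
proof
  \<comment> \<open>In the limit the line joins (fst p, 0) and (0, snd q) and leaves the origin on side s.\<close>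
  define s where "s = sgn (fst p * snd q)"
  let ?side = "\<lambda>x. sgn (orient (cross_embed e (Inl p)) (cross_embed e (Inr q)) x) = s"
  have ne: "fst p \<noteq> 0" "snd q \<noteq> 0"
    using assms fst_ne_0 snd_ne_0 by auto
  then have s: "s \<in> {-1, 1}"
    by (auto simp: s_def sgn_real_def mult_less_0_iff)
  have subA: "{r\<in>A. sgn (fst r) = - sgn (fst p)} \<subseteq> {r\<in>A. ?side (cross_embed e (Inl r))}"
  proof safe
    fix r assume r: "r \<in> A" "sgn (fst r) = - sgn (fst p)"
    then have "r \<noteq> p" "fst r \<noteq> 0"
      using ne fst_ne_0 by (auto simp: sgn_real_def split: if_splits)
    then show "?side (cross_embed e (Inl r))"
      using sgn_orient_cross_embed_mixed[of "Inl p" "Inr q" "Inl r"] assms r ne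
      by (auto simp: orient_cross_embed_0 s_def sgn_real_def mult_less_0_iff zero_less_mult_iff
          split: if_splits)
  qed
  have subB: "{r\<in>B. sgn (snd r) = - sgn (snd q)} \<subseteq> {r\<in>B. ?side (cross_embed e (Inr r))}"
  proof safe
    fix r assume r: "r \<in> B" "sgn (snd r) = - sgn (snd q)"
    then have "r \<noteq> q" "snd r \<noteq> 0"
      using ne snd_ne_0 by (auto simp: sgn_real_def split: if_splits)
    then show "?side (cross_embed e (Inr r))"
      using sgn_orient_cross_embed_mixed[of "Inl p" "Inr q" "Inr r"] assms r ne
      by (auto simp: orient_cross_embed_0 s_def sgn_real_def mult_less_0_iff zero_less_mult_iff
          split: if_splits)
  qed
  have "2 * card {r\<in>A. sgn (fst r) = - sgn (fst p)} = card A"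
    using ne finite halved by (intro halved_by_card_sgn) (auto simp: sgn_real_def)
  moreover have "2 * card {r\<in>B. sgn (snd r) = - sgn (snd q)} = card B"
    using ne finite halved by (intro halved_by_card_sgn) (auto simp: sgn_real_def)
  moreover have "card {r\<in>A. sgn (fst r) = - sgn (fst p)} \<le> card {r\<in>A. ?side (cross_embed e (Inl r))}"
    "card {r\<in>B. sgn (snd r) = - sgn (snd q)} \<le> card {r\<in>B. ?side (cross_embed e (Inr r))}"
    using finite subA subB by (simp_all add: card_mono)
  ultimately have "card points \<le> 2 * card {x\<in>points. ?side x}"
    unfolding card_points card_points_filter distrib_left
    using add_mono[OF mult_le_mono2 mult_le_mono2, of _ _ 2 _ _ 2] by simp
  moreover assume "halving_line points (cross_embed e (Inl p)) (cross_embed e (Inr q))"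
  then have "\<forall>s\<in>{-1, 1}.
      2 * card {x\<in>points. sgn (orient (cross_embed e (Inl p)) (cross_embed e (Inr q)) x) = s} + 2
        = card points"
    unfolding halving_line_sgn_iff by (elim conjE)
  then have "2 * card {x\<in>points. ?side x} + 2 = card points"
    using s by (rule bspec)
  ultimately show False
    by linarith
qed

end

lemma ex_shear_halved_by_fst:
  assumes "finite P" "even (card P)"
  obtains \<sigma> where "inj \<sigma>" "\<And>a b c. orient (\<sigma> a) (\<sigma> b) (\<sigma> c) = orient a b c"
    "halved_by fst (\<sigma> ` P)"
proof -
  obtain t d where halved: "halved_by (\<lambda>p. fst p + t * snd p - d) P"
    using ex_halved_by_shear[OF assms, of fst snd] by (auto simp: inj_on_def prod_eq_iff)
  define \<sigma> where "\<sigma> p = (fst p + t * snd p - d, snd p)" for p :: point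
  have "inj \<sigma>"
    by (rule injI) (auto simp: \<sigma>_def prod_eq_iff)
  moreover have "orient (\<sigma> a) (\<sigma> b) (\<sigma> c) = orient a b c" for a b c
    by (simp add: \<sigma>_def orient_def algebra_simps)
  moreover have "halved_by fst (\<sigma> ` P)"
  proof -
    have "inj_on \<sigma> P"
      using \<open>inj \<sigma>\<close> by (rule inj_on_subset) simp
    moreover have "fst \<circ> \<sigma> = (\<lambda>p. fst p + t * snd p - d)"
      by (simp add: \<sigma>_def comp_def)
    ultimately show ?thesis
      using halved by (simp add: halved_by_image)
  qed
  ultimately show ?thesis
    by (rule that)
qed

lemma ex_shear_halved_by_snd:
  assumes "finite P" "even (card P)"
  obtains \<sigma> where "inj \<sigma>" "\<And>a b c. orient (\<sigma> a) (\<sigma> b) (\<sigma> c) = orient a b c"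
    "halved_by snd (\<sigma> ` P)"
proof -
  obtain \<tau> where \<tau>: "inj \<tau>" "\<And>a b c. orient (\<tau> a) (\<tau> b) (\<tau> c) = orient a b c"
    "halved_by fst (\<tau> ` P)"
    using ex_shear_halved_by_fst[OF assms] by blast
  define \<rho> where "\<rho> p = (- snd p, fst p)" for p :: point
  have "inj \<rho>"
    by (rule injI) (auto simp: \<rho>_def prod_eq_iff)
  have "orient (\<rho> a) (\<rho> b) (\<rho> c) = orient a b c" for a b c
    by (simp add: \<rho>_def orient_def algebra_simps)
  moreover have "halved_by snd (\<rho> ` \<tau> ` P)"
  proof -
    have "snd \<circ> \<rho> = fst"
      by (simp add: \<rho>_def fun_eq_iff)
    then show ?thesis
      using \<tau>(3) halved_by_image[OF inj_on_subset[OF \<open>inj \<rho>\<close> subset_UNIV]] by simp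
  qed
  ultimately show ?thesis
    using \<tau>(1,2) \<open>inj \<rho>\<close> by (intro that[of "\<rho> \<circ> \<tau>"]) (simp_all add: inj_compose image_comp)
qed

theorem mainTheorem1:
  fixes P1 P2 :: "point set"
  assumes "finite P1" and "finite P2"
    and "general_position P1" and "general_position P2"
    and "even (card P1)" and "even (card P2)"
  shows "\<exists>P Q1 Q2 (f :: point \<Rightarrow> point) (g :: point \<Rightarrow> point).
           finite P \<and> card P = card P1 + card P2 \<and> general_position P \<and>
           Q1 \<union> Q2 = P \<and> Q1 \<inter> Q2 = {} \<and>
           (\<forall>p\<in>Q1. \<forall>q\<in>Q2. \<not> underlying_adj P p q \<and> \<not> underlying_adj P q p) \<and>
           bij_betw f P1 Q1 \<and>
           (\<forall>p\<in>P1. \<forall>q\<in>P1. underlying_adj P1 p q \<longleftrightarrow> underlying_adj P (f p) (f q)) \<and>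
           bij_betw g P2 Q2 \<and>
           (\<forall>p\<in>P2. \<forall>q\<in>P2. underlying_adj P2 p q \<longleftrightarrow> underlying_adj P (g p) (g q))"
proof -
  obtain \<sigma>\<^sub>1 where \<sigma>\<^sub>1: "inj \<sigma>\<^sub>1" "\<And>a b c. orient (\<sigma>\<^sub>1 a) (\<sigma>\<^sub>1 b) (\<sigma>\<^sub>1 c) = orient a b c"
      "halved_by fst (\<sigma>\<^sub>1 ` P1)"
    using ex_shear_halved_by_fst[OF assms(1,5)] by blast
  obtain \<sigma>\<^sub>2 where \<sigma>\<^sub>2: "inj \<sigma>\<^sub>2" "\<And>a b c. orient (\<sigma>\<^sub>2 a) (\<sigma>\<^sub>2 b) (\<sigma>\<^sub>2 c) = orient a b c"
      "halved_by snd (\<sigma>\<^sub>2 ` P2)"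
    using ex_shear_halved_by_snd[OF assms(2,6)] by blast
  interpret halved_pair "\<sigma>\<^sub>1 ` P1" "\<sigma>\<^sub>2 ` P2"
    using assms \<sigma>\<^sub>1 \<sigma>\<^sub>2 by unfold_locales (auto intro: general_position_image)
  obtain e where "cross_configuration (\<sigma>\<^sub>1 ` P1) (\<sigma>\<^sub>2 ` P2) e"
    using ex_cross_configuration by blast
  then interpret cross_configuration "\<sigma>\<^sub>1 ` P1" "\<sigma>\<^sub>2 ` P2" e .
  define f where "f p = cross_embed e (Inl (\<sigma>\<^sub>1 p))" for p
  define g where "g q = cross_embed e (Inr (\<sigma>\<^sub>2 q))" for q
  have "bij_betw f P1 (f ` P1)" "bij_betw g P2 (g ` P2)"
    unfolding bij_betw_def f_def g_def
    by (auto intro!: inj_onI dest: inj_onD[OF inj_on_cross_embed_Inl] inj_onD[OF inj_on_cross_embed_Inr]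
        injD[OF \<sigma>\<^sub>1(1)] injD[OF \<sigma>\<^sub>2(1)])
  moreover have "f ` P1 \<union> g ` P2 = points"
    by (simp add: points_eq f_def g_def image_image)
  moreover have "f ` P1 \<inter> g ` P2 = {}"
    using cross_embed_Inl_ne_Inr by (fastforce simp: f_def g_def)
  moreover have "card points = card P1 + card P2"
    using card_points \<sigma>\<^sub>1(1) \<sigma>\<^sub>2(1) by (simp add: card_image inj_on_subset)
  moreover have "\<forall>x\<in>f ` P1. \<forall>y\<in>g ` P2. \<not> underlying_adj points x y \<and> \<not> underlying_adj points y x"
    using not_halving_line_points_Inl_Inr
    by (auto simp: underlying_adj_def halving_line_commute f_def g_def)
  moreover have "\<forall>p\<in>P1. \<forall>q\<in>P1. underlying_adj P1 p q \<longleftrightarrow> underlying_adj points (f p) (f q)"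
    by (simp add: underlying_adj_def f_def halving_line_points_Inl_iff halving_line_image[OF \<sigma>\<^sub>1(1,2)])
  moreover have "\<forall>p\<in>P2. \<forall>q\<in>P2. underlying_adj P2 p q \<longleftrightarrow> underlying_adj points (g p) (g q)"
    by (simp add: underlying_adj_def g_def halving_line_points_Inr_iff halving_line_image[OF \<sigma>\<^sub>2(1,2)])
  ultimately show ?thesis
    using finite_points general_position_points by blast
qed

end
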